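(* Let $L$ be an $r\times m$ integer matrix. There is $K_L>0$ depending only on $L$ such that for every positive integer $p$ there exist elements $j_1/p,\ldots,j_K/p\in J(L,p)$ with $K\le K_L$ such that \[J(L,p)=\bigsqcup_{k=1}^{K}\big(j_k/p+(\Lambda\cap\ker_{\mathbb{T}}L)\big)\] (a disjoint union, with addition in $\mathbb{T}^m$).
   Context: $\mathbb{T}=\mathbb{R}/\mathbb{Z}$, and $\mathbb{T}^m$ is identified with $[0,1)^m$ with coordinatewise addition mod 1. $\ker_{\mathbb{T}}L=\{x\in\mathbb{T}^m:Lx=0\}$ with normalized Haar probability measure $\mu_L$. For a positive integer $p$, $\Lambda=\Lambda(p)=\{j/p: j\in\mathbb{Z}_p^m\}\le\mathbb{T}^m$, where for $j=(j(1),\ldots,j(m))$ with $j(i)\in\{0,\ldots,p-1\}$ we write $j/p=(j(1)/p,\ldots,j(m)/p)$. Define $J(L,p)=\{j/p\in\Lambda:\ \mu_L\big((j/p+[0,1/p)^m)\cap\ker_{\mathbb{T}}L\big)>0\}$. *)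

theory Defs
  imports "HOL-Analysis.Analysis"
begin

text \<open>The torus T^m is identified with [0,1)^m; points are real vectors with
  all coordinates in [0,1); addition is coordinatewise mod 1.\<close>

definition torus :: "(real^'m) set" where
  "torus = {x. \<forall>i. 0 \<le> x$i \<and> x$i < 1}"

definition tadd :: "real^'m \<Rightarrow> real^'m \<Rightarrow> real^'m" where
  "tadd x y = (\<chi> i. frac (x$i + y$i))"

text \<open>ker_T L = {x in T^m : L x = 0 in T^r}, i.e. every entry of L x is an integer.\<close>
definition kerT :: "int^'m^'r \<Rightarrow> (real^'m) set" where
  "kerT L = {x \<in> torus. \<forall>k. (\<Sum>i\<in>UNIV. of_int (L$k$i) * x$i) \<in> \<int>}"

definition haar_on :: "int^'m^'r \<Rightarrow> (real^'m) measure \<Rightarrow> bool" where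
  "haar_on L \<mu> \<longleftrightarrow>
     sets \<mu> = sets (restrict_space borel (kerT L)) \<and>
     emeasure \<mu> (space \<mu>) = 1 \<and>
     (\<forall>a\<in>kerT L. \<forall>A\<in>sets \<mu>. emeasure \<mu> (tadd a ` A) = emeasure \<mu> A)"

definition Lam :: "nat \<Rightarrow> (real^'m) set" where
  "Lam p = {x. \<forall>i. \<exists>j::nat. j < p \<and> x$i = real j / real p}"

definition cell :: "nat \<Rightarrow> real^'m \<Rightarrow> (real^'m) set" where
  "cell p x = {y. \<forall>i. x$i \<le> y$i \<and> y$i < x$i + 1 / real p}"

definition J :: "int^'m^'r \<Rightarrow> (real^'m) measure \<Rightarrow> nat \<Rightarrow> (real^'m) set" where
  "J L \<mu> p = {x \<in> Lam p. measure \<mu> (cell p x \<inter> kerT L) > 0}"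

end

theory Submission
  imports Defs
begin

text \<open>Write \<open>\<phi>(x) = Lx mod 1\<close> for the homomorphism \<open>\<T>\<^sup>m \<rightarrow> \<T>\<^sup>r\<close> induced by \<open>L\<close>.
  Translation invariance of the Haar measure, together with the fact that translating a cell
  by a point of \<open>\<Lambda>\<close> gives again a cell, makes \<open>J(L,p)\<close> a union of cosets of
  \<open>\<Lambda> \<inter> ker L\<close>; two points of \<open>\<Lambda>\<close> lie in the same coset exactly when their
  \<open>\<phi>\<close>-values agree. If the cell at \<open>x \<in> \<Lambda>\<close> meets \<open>ker L\<close> in some \<open>y\<close>, then
  \<open>\<phi>(x) = pL(x - y)/p mod 1\<close>, and \<open>pL(x - y)\<close> is an integer vector whose entries are
  bounded by the sum \<open>C\<close> of the absolute values of the entries of \<open>L\<close>. So \<open>\<phi>\<close> takes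
  at most \<open>(2C + 1)\<^sup>r\<close> values on \<open>J(L,p)\<close>, and this bounds the number of cosets
  independently of \<open>p\<close>.\<close>

definition vec_Ints :: "('a::ring_1 ^ 'n) set" where
  "vec_Ints = {v. \<forall>i. v$i \<in> \<int>}"

lemma vec_Ints_iff: "v \<in> vec_Ints \<longleftrightarrow> (\<forall>i. v$i \<in> \<int>)"
  by (simp add: vec_Ints_def)

lemma vec_Ints_add [intro]: "u \<in> vec_Ints \<Longrightarrow> v \<in> vec_Ints \<Longrightarrow> u + v \<in> vec_Ints"
  by (simp add: vec_Ints_iff)

lemma vec_Ints_diff [intro]: "u \<in> vec_Ints \<Longrightarrow> v \<in> vec_Ints \<Longrightarrow> u - v \<in> vec_Ints"
  by (simp add: vec_Ints_iff)

lemma vec_Ints_uminus [intro]: "v \<in> vec_Ints \<Longrightarrow> - v \<in> vec_Ints"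
  by (simp add: vec_Ints_iff)

lemma vec_Ints_scaleR_of_nat [intro]:
  fixes v :: "real ^ 'n"
  shows "v \<in> vec_Ints \<Longrightarrow> real n *\<^sub>R v \<in> vec_Ints"
  by (simp add: vec_Ints_iff Ints_mult)

lemma matrix_vector_mult_of_int_vec_Ints [intro]:
  fixes L :: "int^'n^'m" and v :: "'a::ring_1 ^ 'n"
  assumes "v \<in> vec_Ints"
  shows "map_matrix of_int L *v v \<in> vec_Ints"
  using assms by (auto simp: vec_Ints_iff matrix_vector_mult_def intro!: Ints_sum Ints_mult)

lemma kerT_iff: "x \<in> kerT L \<longleftrightarrow> x \<in> torus \<and> map_matrix of_int L *v x \<in> vec_Ints"
  by (simp add: kerT_def vec_Ints_iff matrix_vector_mult_def)

lemma tadd_torus: "tadd x y \<in> torus"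
  by (simp add: tadd_def torus_def frac_lt_1)

lemma tadd_eq_iff: "z \<in> torus \<Longrightarrow> tadd x y = z \<longleftrightarrow> x + y - z \<in> vec_Ints"
  by (auto simp: tadd_def torus_def vec_Ints_iff vec_eq_iff frac_unique_iff)

lemma add_diff_tadd_vec_Ints: "x + y - tadd x y \<in> vec_Ints"
  using tadd_eq_iff[OF tadd_torus] by blast

lemma tadd_zero_right: "x \<in> torus \<Longrightarrow> tadd x 0 = x"
  by (simp add: tadd_eq_iff vec_Ints_iff)

lemma zero_kerT: "0 \<in> kerT L"
  by (simp add: kerT_iff torus_def vec_Ints_iff)

lemma tadd_kerT:
  assumes "x \<in> kerT L" "y \<in> kerT L"
  shows "tadd x y \<in> kerT L"
proof -
  let ?L = "map_matrix of_int L"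
  have "?L *v tadd x y = ?L *v x + ?L *v y - ?L *v (x + y - tadd x y)"
    by (simp add: algebra_simps)
  also have "\<dots> \<in> vec_Ints"
    using assms add_diff_tadd_vec_Ints by (auto simp: kerT_iff)
  finally show ?thesis by (simp add: kerT_iff tadd_torus)
qed

lemma Lam_iff: "p > 0 \<Longrightarrow> x \<in> Lam p \<longleftrightarrow> x \<in> torus \<and> real p *\<^sub>R x \<in> vec_Ints"
proof (intro iffI conjI)
  assume "p > 0" "x \<in> Lam p"
  have "0 \<le> x$i \<and> x$i < 1 \<and> real p * x$i \<in> \<int>" for i
  proof -
    obtain j where "j < p" "x$i = real j / real p"
      using \<open>x \<in> Lam p\<close> by (auto simp: Lam_def)
    with \<open>p > 0\<close> show ?thesis by simp
  qed
  then show "x \<in> torus" "real p *\<^sub>R x \<in> vec_Ints"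
    by (simp_all add: torus_def vec_Ints_iff)
next
  assume p: "p > 0" and x: "x \<in> torus \<and> real p *\<^sub>R x \<in> vec_Ints"
  show "x \<in> Lam p" unfolding Lam_def
  proof (intro CollectI allI)
    fix i
    obtain n where n: "real p * x$i = of_int n"
      using x by (auto simp: vec_Ints_iff elim!: Ints_cases)
    have "0 \<le> x$i" "x$i < 1"
      using x by (auto simp: torus_def)
    with p have "0 \<le> real p * x$i" "real p * x$i < real p * 1"
      by simp_all
    with n have "0 \<le> real_of_int n" "real_of_int n < real p"
      by simp_all
    then have "0 \<le> n" "n < int p"
      by linarith+
    then show "\<exists>j<p. x$i = real j / real p"
      using n p by (intro exI[of _ "nat n"]) (auto simp: field_simps)
  qed
qed

lemma tadd_Lam:
  assumes "p > 0" "real p *\<^sub>R x \<in> vec_Ints" "real p *\<^sub>R y \<in> vec_Ints"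
  shows "tadd x y \<in> Lam p"
proof -
  have "real p *\<^sub>R tadd x y = real p *\<^sub>R x + real p *\<^sub>R y - real p *\<^sub>R (x + y - tadd x y)"
    by (simp add: algebra_simps)
  also have "\<dots> \<in> vec_Ints"
    using assms add_diff_tadd_vec_Ints by blast
  finally show ?thesis
    using assms(1) by (simp add: Lam_iff tadd_torus)
qed

lemma tadd_Lam_kerT:
  assumes "p > 0" "x \<in> Lam p \<inter> kerT L" "y \<in> Lam p \<inter> kerT L"
  shows "tadd x y \<in> Lam p \<inter> kerT L"
  using assms tadd_kerT[of x L y] tadd_Lam[of p x y] by (simp add: Lam_iff)

lemma zero_Lam: "p > 0 \<Longrightarrow> 0 \<in> Lam p"
  by (auto simp: Lam_def)

lemma Lam_coord_le: "x \<in> Lam p \<Longrightarrow> x$i + 1 / real p \<le> 1"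
proof -
  assume "x \<in> Lam p"
  then obtain j where "j < p" "x$i = real j / real p"
    by (auto simp: Lam_def)
  then show ?thesis
    by (simp add: field_simps flip: add_divide_distrib)
qed

lemma mem_tadd_Lam_kerT_self:
  assumes "p > 0" "x \<in> Lam p"
  shows "x \<in> tadd x ` (Lam p \<inter> kerT L)"
proof -
  have "x = tadd x 0"
    using assms by (simp add: Lam_iff tadd_zero_right)
  moreover have "0 \<in> Lam p \<inter> kerT L"
    using assms(1) zero_Lam zero_kerT by blast
  ultimately show ?thesis by blast
qed

definition torus_map :: "int^'m^'r \<Rightarrow> real^'m \<Rightarrow> real^'r" where
  "torus_map L x = (\<chi> k. frac ((map_matrix of_int L *v x)$k))"

lemma frac_eq_iff_diff_Ints: "frac x = frac y \<longleftrightarrow> x - y \<in> \<int>"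
proof
  assume "frac x = frac y"
  then show "x - y \<in> \<int>" by (auto elim: frac_eqE)
next
  assume "x - y \<in> \<int>"
  then show "frac x = frac y" using frac_add_int_left[of "x - y" y] by simp
qed

lemma torus_map_eq_iff:
  "torus_map L x = torus_map L y \<longleftrightarrow> map_matrix of_int L *v (x - y) \<in> vec_Ints"
  by (simp add: torus_map_def vec_eq_iff frac_eq_iff_diff_Ints vec_Ints_iff algebra_simps)

lemma torus_map_tadd_kerT:
  assumes "h \<in> kerT L"
  shows "torus_map L (tadd x h) = torus_map L x"
proof -
  let ?L = "map_matrix of_int L"
  have "?L *v (tadd x h - x) = ?L *v h - ?L *v (x + h - tadd x h)"
    by (simp add: algebra_simps)
  also have "\<dots> \<in> vec_Ints"
    using assms add_diff_tadd_vec_Ints by (auto simp: kerT_iff)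
  finally show ?thesis by (simp add: torus_map_eq_iff)
qed

lemma torus_map_eq_if_cosets_meet:
  assumes "tadd x ` (Lam p \<inter> kerT L) \<inter> tadd y ` (Lam p \<inter> kerT L) \<noteq> {}"
  shows "torus_map L x = torus_map L y"
proof -
  obtain h h' where "h \<in> kerT L" "h' \<in> kerT L" "tadd x h = tadd y h'"
    using assms by blast
  then show ?thesis by (metis torus_map_tadd_kerT)
qed

lemma coset_subset_if_torus_map_eq:
  assumes p: "p > 0" and x: "x \<in> Lam p" and x': "x' \<in> Lam p"
    and eq: "torus_map L x = torus_map L x'"
  shows "tadd x ` (Lam p \<inter> kerT L) \<subseteq> tadd x' ` (Lam p \<inter> kerT L)"
proof
  let ?L = "map_matrix of_int L"
  define d where "d = tadd x (- x')"
  have d_Lam: "d \<in> Lam p"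
    using p x x' unfolding d_def by (intro tadd_Lam) (auto simp: Lam_iff)
  have d_kerT: "d \<in> kerT L"
  proof -
    have "?L *v d = ?L *v (x - x') - ?L *v (x + - x' - d)"
      by (simp add: algebra_simps)
    also have "\<dots> \<in> vec_Ints"
      using eq add_diff_tadd_vec_Ints[of x "- x'"] by (auto simp: torus_map_eq_iff d_def)
    finally show ?thesis by (simp add: kerT_iff d_def tadd_torus)
  qed
  fix z assume "z \<in> tadd x ` (Lam p \<inter> kerT L)"
  then obtain h where h: "h \<in> Lam p \<inter> kerT L" and z: "z = tadd x h"
    by blast
  have "tadd x' (tadd d h) = tadd x h"
  proof -
    have "x' + tadd d h - tadd x h = (x + h - tadd x h) - (d + h - tadd d h) - (x + - x' - d)"
      by (simp add: algebra_simps)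
    also have "\<dots> \<in> vec_Ints"
      using add_diff_tadd_vec_Ints unfolding d_def by blast
    finally show ?thesis by (simp add: tadd_eq_iff tadd_torus)
  qed
  moreover have "tadd d h \<in> Lam p \<inter> kerT L"
    using p d_Lam d_kerT h by (intro tadd_Lam_kerT) auto
  ultimately show "z \<in> tadd x' ` (Lam p \<inter> kerT L)"
    using z by (metis image_eqI)
qed

lemma coset_eq_if_torus_map_eq:
  assumes "p > 0" "x \<in> Lam p" "x' \<in> Lam p" "torus_map L x = torus_map L x'"
  shows "tadd x ` (Lam p \<inter> kerT L) = tadd x' ` (Lam p \<inter> kerT L)"
  using assms coset_subset_if_torus_map_eq by (metis subset_antisym)

lemma tadd_cell:
  assumes p: "p > 0" and x: "x \<in> Lam p" and h: "h \<in> Lam p" and y: "y \<in> cell p x"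
  shows "tadd h y \<in> cell p (tadd x h)"
proof -
  have xh: "tadd x h \<in> Lam p"
    using p x h by (intro tadd_Lam) (auto simp: Lam_iff)
  have "0 \<le> (tadd x h + (y - x))$i \<and> (tadd x h + (y - x))$i < 1" for i
  proof -
    have "x$i \<le> y$i" "y$i < x$i + 1 / real p"
      using y by (simp_all add: cell_def)
    moreover have "0 \<le> tadd x h $ i"
      using tadd_torus[of x h] by (simp add: torus_def)
    ultimately show ?thesis
      using Lam_coord_le[OF xh, of i] by simp
  qed
  then have "tadd x h + (y - x) \<in> torus"
    by (simp add: torus_def)
  moreover have "h + y - (tadd x h + (y - x)) \<in> vec_Ints"
    using add_diff_tadd_vec_Ints[of x h] by (simp add: algebra_simps)
  ultimately have "tadd h y = tadd x h + (y - x)"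
    by (simp add: tadd_eq_iff)
  with y show ?thesis
    by (auto simp: cell_def diff_less_eq add.commute)
qed

lemma haar_on_finite_measure: "haar_on L \<mu> \<Longrightarrow> finite_measure \<mu>"
  by (simp add: haar_on_def finite_measureI)

lemma cell_kerT_sets:
  assumes "haar_on L \<mu>"
  shows "cell p x \<inter> kerT L \<in> sets \<mu>"
proof -
  have "cell p x \<in> sets borel"
    unfolding cell_def by measurable
  with assms show ?thesis
    by (auto simp: haar_on_def sets_restrict_space)
qed

lemma J_tadd:
  assumes haar: "haar_on L \<mu>" and p: "p > 0" and x: "x \<in> J L \<mu> p"
    and h: "h \<in> Lam p" "h \<in> kerT L"
  shows "tadd x h \<in> J L \<mu> p"
proof -
  interpret finite_measure \<mu>
    using haar by (rule haar_on_finite_measure)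
  have xLam: "x \<in> Lam p" and pos: "measure \<mu> (cell p x \<inter> kerT L) > 0"
    using x by (auto simp: J_def)
  have "measure \<mu> (cell p x \<inter> kerT L) = measure \<mu> (tadd h ` (cell p x \<inter> kerT L))"
    using haar h(2) cell_kerT_sets[OF haar] by (simp add: haar_on_def measure_def)
  also have "\<dots> \<le> measure \<mu> (cell p (tadd x h) \<inter> kerT L)"
    using tadd_cell[OF p xLam h(1)] tadd_kerT[OF h(2)] cell_kerT_sets[OF haar]
    by (intro finite_measure_mono) auto
  finally have "measure \<mu> (cell p (tadd x h) \<inter> kerT L) > 0"
    using pos by linarith
  moreover have "tadd x h \<in> Lam p"
    using p xLam h(1) by (intro tadd_Lam) (auto simp: Lam_iff)
  ultimately show ?thesis by (simp add: J_def)
qed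

definition abs_entry_sum :: "int^'m^'r \<Rightarrow> int" where
  "abs_entry_sum L = (\<Sum>k\<in>UNIV. \<Sum>i\<in>UNIV. \<bar>L$k$i\<bar>)"

definition frac_grid :: "nat \<Rightarrow> int \<Rightarrow> (real^'r) set" where
  "frac_grid p C = (\<lambda>z. \<chi> k. frac (of_int (z k) / real p)) ` (\<Pi>\<^sub>E k\<in>UNIV. {-C..C})"

lemma finite_frac_grid: "finite (frac_grid p C)"
  by (simp add: frac_grid_def finite_PiE)

lemma card_frac_grid_le: "card (frac_grid p C :: (real^'r) set) \<le> nat (2 * C + 1) ^ CARD('r)"
proof -
  have "card (frac_grid p C :: (real^'r) set) \<le> card (\<Pi>\<^sub>E k\<in>(UNIV::'r set). {-C..C})"
    unfolding frac_grid_def by (rule card_image_le) (simp add: finite_PiE)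
  also have "\<dots> = nat (2 * C + 1) ^ CARD('r)"
    by (simp add: card_PiE)
  finally show ?thesis .
qed

lemma abs_matrix_vector_mult_cell_le:
  assumes "y \<in> cell p x"
  shows "real p * \<bar>(map_matrix of_int L *v (y - x))$k\<bar> \<le> of_int (abs_entry_sum L)"
proof -
  have "real p * \<bar>(map_matrix of_int L *v (y - x))$k\<bar>
      \<le> real p * (\<Sum>i\<in>UNIV. \<bar>of_int (L$k$i) * (y$i - x$i)\<bar>)"
    unfolding matrix_vector_mult_def by (simp add: mult_left_mono sum_abs)
  also have "\<dots> = (\<Sum>i\<in>UNIV. \<bar>of_int (L$k$i)\<bar> * (real p * \<bar>y$i - x$i\<bar>))"
    by (simp add: sum_distrib_left abs_mult mult.left_commute)
  also have "\<dots> \<le> (\<Sum>i\<in>UNIV. \<bar>of_int (L$k$i)\<bar>)"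
  proof (rule sum_mono)
    fix i
    have "x$i \<le> y$i" "y$i < x$i + 1 / real p"
      using assms by (simp_all add: cell_def)
    then have "real p * \<bar>y$i - x$i\<bar> \<le> real p * (1 / real p)"
      by (intro mult_left_mono) auto
    also have "\<dots> \<le> 1"
      by simp
    finally show "\<bar>of_int (L$k$i)\<bar> * (real p * \<bar>y$i - x$i\<bar>) \<le> \<bar>of_int (L$k$i)\<bar>"
      by (simp add: mult_left_le)
  qed
  also have "\<dots> \<le> of_int (abs_entry_sum L)"
    unfolding abs_entry_sum_def of_int_sum of_int_abs
    by (rule member_le_sum) (auto intro: sum_nonneg)
  finally show ?thesis .
qed

lemma torus_map_J_in_frac_grid:
  assumes p: "p > 0" and x: "x \<in> J L \<mu> p"
  shows "torus_map L x \<in> frac_grid p (abs_entry_sum L)"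
proof -
  let ?L = "map_matrix of_int L"
  have xLam: "x \<in> Lam p" and "measure \<mu> (cell p x \<inter> kerT L) > 0"
    using x by (auto simp: J_def)
  then have "cell p x \<inter> kerT L \<noteq> {}"
    by auto
  then obtain y where y: "y \<in> cell p x" "y \<in> kerT L"
    by blast
  define w where "w = ?L *v (real p *\<^sub>R x) - real p *\<^sub>R (?L *v y)"
  have "?L *v (real p *\<^sub>R x) \<in> vec_Ints"
    using xLam p by (intro matrix_vector_mult_of_int_vec_Ints) (simp add: Lam_iff)
  moreover have "real p *\<^sub>R (?L *v y) \<in> vec_Ints"
    using y(2) by (intro vec_Ints_scaleR_of_nat) (simp add: kerT_iff)
  ultimately have "w \<in> vec_Ints"
    unfolding w_def by (rule vec_Ints_diff)
  define z where "z k = \<lfloor>w$k\<rfloor>" for k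
  have z: "w$k = of_int (z k)" for k
    using \<open>w \<in> vec_Ints\<close> by (simp add: z_def vec_Ints_iff)
  have "w = - (real p *\<^sub>R (?L *v (y - x)))"
    by (simp add: w_def algebra_simps)
  then have "real_of_int \<bar>z k\<bar> \<le> of_int (abs_entry_sum L)" for k
    using abs_matrix_vector_mult_cell_le[OF y(1), of L k] z[of k, symmetric]
    by (simp add: abs_mult)
  then have "\<bar>z k\<bar> \<le> abs_entry_sum L" for k
    by (simp only: of_int_le_iff)
  then have "z \<in> (\<Pi>\<^sub>E k\<in>UNIV. {- abs_entry_sum L..abs_entry_sum L})"
    by (auto simp: abs_le_iff minus_le_iff)
  moreover have "torus_map L x = (\<chi> k. frac (of_int (z k) / real p))"
  proof -
    have "(?L *v x)$k = of_int (z k) / real p + (?L *v y)$k" for k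
    proof -
      have "of_int (z k) = real p * (?L *v x)$k - real p * (?L *v y)$k"
        using z[of k] by (simp add: w_def matrix_vector_mult_scaleR)
      with p show ?thesis
        by (simp add: field_simps)
    qed
    moreover have "(?L *v y)$k \<in> \<int>" for k
      using y(2) by (simp add: kerT_iff vec_Ints_iff)
    ultimately show ?thesis
      by (simp add: torus_map_def frac_add_int_right)
  qed
  ultimately show ?thesis
    unfolding frac_grid_def by blast
qed

lemma partition_by_representatives:
  assumes fin: "finite (f ` S)" and card: "card (f ` S) \<le> K"
    and self: "\<And>x. x \<in> S \<Longrightarrow> x \<in> c x"
    and sub: "\<And>x. x \<in> S \<Longrightarrow> c x \<subseteq> S"
    and eq: "\<And>x y. x \<in> S \<Longrightarrow> y \<in> S \<Longrightarrow> f x = f y \<Longrightarrow> c x = c y"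
    and meet: "\<And>x y. x \<in> S \<Longrightarrow> y \<in> S \<Longrightarrow> c x \<inter> c y \<noteq> {} \<Longrightarrow> f x = f y"
  shows "\<exists>js. length js \<le> K \<and> set js \<subseteq> S \<and> S = (\<Union>k<length js. c (js!k)) \<and>
    (\<forall>k<length js. \<forall>l<length js. k \<noteq> l \<longrightarrow> c (js!k) \<inter> c (js!l) = {})"
proof -
  obtain vs where vs: "set vs = f ` S" "distinct vs"
    using finite_distinct_list[OF fin] by blast
  define js where "js = map (inv_into S f) vs"
  have js_S: "js!k \<in> S" and f_js: "f (js!k) = vs!k" if "k < length js" for k
    using that vs(1) nth_mem[of k vs] by (auto simp: js_def inv_into_into f_inv_into_f)
  have "length js \<le> K"
    using card distinct_card[OF vs(2)] vs(1) by (simp add: js_def)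
  moreover have "set js \<subseteq> S"
    using js_S by (auto simp: in_set_conv_nth)
  moreover have "S = (\<Union>k<length js. c (js!k))"
  proof
    show "S \<subseteq> (\<Union>k<length js. c (js!k))"
    proof
      fix x assume x: "x \<in> S"
      then obtain k where k: "k < length vs" "vs!k = f x"
        using vs(1) by (metis imageI in_set_conv_nth)
      moreover have "k < length js"
        using k(1) by (simp add: js_def)
      ultimately have "c x = c (js!k)"
        using eq[OF x js_S] f_js by metis
      with \<open>k < length js\<close> self[OF x] show "x \<in> (\<Union>k<length js. c (js!k))"
        by auto
    qed
    show "(\<Union>k<length js. c (js!k)) \<subseteq> S"
      using sub js_S by blast
  qed
  moreover have "c (js!k) \<inter> c (js!l) = {}"
    if "k < length js" "l < length js" "k \<noteq> l" for k l
    using that meet[OF js_S js_S] f_js vs(2) by (auto simp: js_def nth_eq_iff_index_eq)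
  ultimately show ?thesis
    by blast
qed

lemma J_partition_into_cosets:
  fixes L :: "int^'m^'r"
  assumes haar: "haar_on L \<mu>" and p: "p > 0"
  shows "\<exists>js. length js \<le> nat (2 * abs_entry_sum L + 1) ^ CARD('r) \<and> set js \<subseteq> J L \<mu> p \<and>
      J L \<mu> p = (\<Union>k<length js. tadd (js!k) ` (Lam p \<inter> kerT L)) \<and>
      (\<forall>k<length js. \<forall>l<length js. k \<noteq> l \<longrightarrow>
         tadd (js!k) ` (Lam p \<inter> kerT L) \<inter> tadd (js!l) ` (Lam p \<inter> kerT L) = {})"
    (is "\<exists>js. length js \<le> ?K \<and> _")
proof (rule partition_by_representatives[where f = "torus_map L"])
  have grid: "torus_map L ` J L \<mu> p \<subseteq> frac_grid p (abs_entry_sum L)"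
    using torus_map_J_in_frac_grid[OF p] by blast
  then show "finite (torus_map L ` J L \<mu> p)"
    using finite_frac_grid by (rule finite_subset)
  show "card (torus_map L ` J L \<mu> p) \<le> ?K"
    using card_mono[OF finite_frac_grid grid] card_frac_grid_le by (rule order_trans)
  have JLam: "x \<in> J L \<mu> p \<Longrightarrow> x \<in> Lam p" for x
    by (simp add: J_def)
  show "x \<in> tadd x ` (Lam p \<inter> kerT L)" if "x \<in> J L \<mu> p" for x
    using p JLam[OF that] by (rule mem_tadd_Lam_kerT_self)
  show "tadd x ` (Lam p \<inter> kerT L) \<subseteq> J L \<mu> p" if "x \<in> J L \<mu> p" for x
    using J_tadd[OF haar p that] by blast
  show "tadd x ` (Lam p \<inter> kerT L) = tadd y ` (Lam p \<inter> kerT L)"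
    if "x \<in> J L \<mu> p" "y \<in> J L \<mu> p" "torus_map L x = torus_map L y" for x y
    using p JLam[OF that(1)] JLam[OF that(2)] that(3) by (rule coset_eq_if_torus_map_eq)
  show "torus_map L x = torus_map L y"
    if "x \<in> J L \<mu> p" "y \<in> J L \<mu> p"
      "tadd x ` (Lam p \<inter> kerT L) \<inter> tadd y ` (Lam p \<inter> kerT L) \<noteq> {}" for x y
    using that(3) by (rule torus_map_eq_if_cosets_meet)
qed

theorem lemma2p4:
  fixes L :: "int^'m^'r"
  shows "\<exists>KL::nat. KL > 0 \<and>
    (\<forall>\<mu>. haar_on L \<mu> \<longrightarrow>
      (\<forall>p::nat. p > 0 \<longrightarrow>
        (\<exists>js :: (real^'m) list.
           length js \<le> KL \<and> set js \<subseteq> J L \<mu> p \<and>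
           J L \<mu> p = (\<Union>k<length js. tadd (js!k) ` (Lam p \<inter> kerT L)) \<and>
           (\<forall>k<length js. \<forall>l<length js. k \<noteq> l \<longrightarrow>
              tadd (js!k) ` (Lam p \<inter> kerT L) \<inter> tadd (js!l) ` (Lam p \<inter> kerT L) = {}))))"
proof (rule exI, intro conjI allI impI)
  have "abs_entry_sum L \<ge> 0"
    unfolding abs_entry_sum_def by (intro sum_nonneg) auto
  then show "nat (2 * abs_entry_sum L + 1) ^ CARD('r) > 0"
    by simp
qed (rule J_partition_into_cosets)

end
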